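(* Near linear Zarankiewicz bounds are preserved under local trace definability: if a structure $\mathcal{N}$ has near linear Zarankiewicz bounds and $\mathcal{N}$ locally trace defines a structure $\mathcal{M}$, then $\mathcal{M}$ has near linear Zarankiewicz bounds.
   Context: "Definable" means with parameters. $\mathcal{N}$ locally trace defines $\mathcal{M}$ if there is a possibly infinite collection $\mathcal{E}$ of functions $M\to N$ such that every $\mathcal{M}$-definable subset of every $M^m$ is of the form $\{(a_1,\dots,a_m) : (f_1(a_{i_1}),\dots,f_n(a_{i_n}))\in Y\}$ for some $f_1,\dots,f_n\in\mathcal{E}$, $i_1,\dots,i_n\in\{1,\dots,m\}$ and $\mathcal{N}$-definable $Y\subseteq N^n$. A bipartite graph with sorts $V,W$ and edges $E\subseteq V\times W$ is $K_{m,n}$-free if it contains no complete bipartite subgraph with parts of size $m,n$. A class $\mathcal{C}$ of finite bipartite graphs has near linear Zarankiewicz bounds if for every $m$ and real $\varepsilon>0$ there is real $\lambda>0$ with every $K_{m,m}$-free $\mathcal{G}\in\mathcal{C}$ having at most $\lambda|\mathcal{G}|^{1+\varepsilon}$ edges ($|\mathcal{G}|$ the number of vertices). A bipartite graph has near linear Zarankiewicz bounds if the class of its finite substructures does, and a structure has them if every bipartite graph definable in it does (equivalently, this holds in every model of its theory). *)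

theory Defs
  imports Complex_Main
begin

text \<open>A first-order structure with universe the type 'a is represented by the family
of its definable (with parameters) sets: D m is the collection of definable subsets of
M^m, tuples being lists of length m.  The closure conditions below are exactly those
satisfied by the definable-with-parameters sets of a structure, and conversely any such
family is the family of definable sets of the structure naming each of its members.\<close>

definition tuples :: "nat \<Rightarrow> 'a list set" where
  "tuples m = {xs. length xs = m}"

definition is_structure :: "(nat \<Rightarrow> 'a list set set) \<Rightarrow> bool" where
  "is_structure D \<longleftrightarrow>
     (\<forall>m. \<forall>X\<in>D m. X \<subseteq> tuples m)
   \<and> (\<forall>m. tuples m \<in> D m)
   \<and> (\<forall>m. \<forall>X\<in>D m. tuples m - X \<in> D m)
   \<and> (\<forall>m. \<forall>X\<in>D m. \<forall>Y\<in>D m. X \<inter> Y \<in> D m)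
   \<and> (\<forall>m n (\<sigma>::nat \<Rightarrow> nat). \<forall>X\<in>D m. (\<forall>j<m. \<sigma> j < n) \<longrightarrow>
        {ys \<in> tuples n. map (\<lambda>j. ys ! \<sigma> j) [0..<m] \<in> X} \<in> D n)
   \<and> (\<forall>m. \<forall>X\<in>D (Suc m). {xs \<in> tuples m. \<exists>a. xs @ [a] \<in> X} \<in> D m)
   \<and> {[x, x] | x. True} \<in> D 2
   \<and> (\<forall>a. {[a]} \<in> D 1)"

definition locally_trace_defines ::
  "(nat \<Rightarrow> 'b list set set) \<Rightarrow> (nat \<Rightarrow> 'a list set set) \<Rightarrow> bool" where
  "locally_trace_defines DN DM \<longleftrightarrow>
     (\<exists>Es :: ('a \<Rightarrow> 'b) set.
        \<forall>m. \<forall>X\<in>DM m. \<exists>n (f :: nat \<Rightarrow> 'a \<Rightarrow> 'b) (i :: nat \<Rightarrow> nat) Y.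
           (\<forall>j<n. f j \<in> Es) \<and> (\<forall>j<n. i j < m) \<and> Y \<in> DN n \<and>
           X = {as \<in> tuples m. map (\<lambda>j. f j (as ! i j)) [0..<n] \<in> Y})"

definition K_free :: "'v set \<Rightarrow> 'w set \<Rightarrow> ('v \<Rightarrow> 'w \<Rightarrow> bool) \<Rightarrow> nat \<Rightarrow> nat \<Rightarrow> bool" where
  "K_free A B E m n \<longleftrightarrow>
     \<not> (\<exists>A' B'. A' \<subseteq> A \<and> B' \<subseteq> B \<and> finite A' \<and> finite B' \<and>
               card A' = m \<and> card B' = n \<and> (\<forall>a\<in>A'. \<forall>b\<in>B'. E a b))"

definition edges :: "'v set \<Rightarrow> 'w set \<Rightarrow> ('v \<Rightarrow> 'w \<Rightarrow> bool) \<Rightarrow> ('v \<times> 'w) set" where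
  "edges A B E = {(a, b). a \<in> A \<and> b \<in> B \<and> E a b}"

definition near_linear_zb :: "'v set \<Rightarrow> 'w set \<Rightarrow> ('v \<Rightarrow> 'w \<Rightarrow> bool) \<Rightarrow> bool" where
  "near_linear_zb V W E \<longleftrightarrow>
     (\<forall>(m::nat). \<forall>(\<epsilon>::real) > 0. \<exists>(c::real) > 0. \<forall>A B.
        finite A \<and> A \<subseteq> V \<and> finite B \<and> B \<subseteq> W \<and> K_free A B E m m \<longrightarrow>
        real (card (edges A B E)) \<le> c * real (card A + card B) powr (1 + \<epsilon>))"

definition struct_near_linear_zb :: "(nat \<Rightarrow> 'a list set set) \<Rightarrow> bool" where
  "struct_near_linear_zb D \<longleftrightarrow>
     (\<forall>k l V W E. V \<in> D k \<and> W \<in> D l \<and> E \<in> D (k + l) \<longrightarrow>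
        near_linear_zb V W (\<lambda>v w. v @ w \<in> E))"

end

theory Submission
  imports Defs
begin

text \<open>Let E \<subseteq> M^(k+l) be the edge relation of an M-definable bipartite graph on V \<subseteq> M^k,
W \<subseteq> M^l.  A trace definition of E reads off finitely many coordinates f j (as ! i j) of
the tuple as = v @ w, each depending on v alone or on w alone; a trace definition of the
diagonal of M yields an injective code e : M \<rightarrow> N^c.  Sending v to its own trace
coordinates followed by the codes of its entries, and likewise w, embeds (V, W, E) as an
induced subgraph into a bipartite graph definable in N.  Induced subgraphs inherit
near linear Zarankiewicz bounds, since injective edge-reflecting maps preserve
K_{m,m}-freeness, vertex counts and edge counts.\<close>

lemma is_structure_subset_tuples: "is_structure D \<Longrightarrow> X \<in> D m \<Longrightarrow> X \<subseteq> tuples m"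
  unfolding is_structure_def by blast

lemma is_structure_tuples: "is_structure D \<Longrightarrow> tuples m \<in> D m"
  unfolding is_structure_def by blast

lemma is_structure_diagonal: "is_structure D \<Longrightarrow> {[x, x] | x. True} \<in> D 2"
  unfolding is_structure_def by blast

lemma is_structure_reindex:
  assumes "is_structure D" "X \<in> D m" "\<forall>j<m. \<sigma> j < n"
  shows "{ys \<in> tuples n. map (\<lambda>j. ys ! \<sigma> j) [0..<m] \<in> X} \<in> D n"
proof -
  have "\<forall>m n (\<sigma> :: nat \<Rightarrow> nat). \<forall>X\<in>D m. (\<forall>j<m. \<sigma> j < n) \<longrightarrow>
      {ys \<in> tuples n. map (\<lambda>j. ys ! \<sigma> j) [0..<m] \<in> X} \<in> D n"
    using assms(1) unfolding is_structure_def by (elim conjE) assumption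
  then show ?thesis
    using assms(2,3) by blast
qed

lemma locally_trace_definesE:
  fixes DN :: "nat \<Rightarrow> 'b list set set" and DM :: "nat \<Rightarrow> 'a list set set"
  assumes "locally_trace_defines DN DM" "X \<in> DM m"
  obtains n f i Y where "\<forall>j<n. i j < m" "Y \<in> DN n"
    "X = {as \<in> tuples m. map (\<lambda>j. f j (as ! i j)) [0..<n] \<in> Y}"
proof -
  obtain Es :: "('a \<Rightarrow> 'b) set" where "\<forall>m. \<forall>X\<in>DM m. \<exists>n f i Y.
      (\<forall>j<n. f j \<in> Es) \<and> (\<forall>j<n. i j < m) \<and> Y \<in> DN n \<and>
      X = {as \<in> tuples m. map (\<lambda>j. f j (as ! i j)) [0..<n] \<in> Y}"
    using assms(1) unfolding locally_trace_defines_def by (elim exE)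
  from this[rule_format, OF assms(2)] show thesis
    using that by iprover
qed

lemma K_free_image:
  assumes "inj_on G A" "inj_on H B"
    and "\<And>v w. v \<in> A \<Longrightarrow> w \<in> B \<Longrightarrow> E v w \<longleftrightarrow> E' (G v) (H w)"
    and "K_free A B E m n"
  shows "K_free (G ` A) (H ` B) E' m n"
  unfolding K_free_def
proof
  assume "\<exists>A' B'. A' \<subseteq> G ` A \<and> B' \<subseteq> H ` B \<and> finite A' \<and> finite B' \<and>
            card A' = m \<and> card B' = n \<and> (\<forall>a\<in>A'. \<forall>b\<in>B'. E' a b)"
  then obtain A0 B0 where A0: "A0 \<subseteq> A" "inj_on G A0" and B0: "B0 \<subseteq> B" "inj_on H B0"
    and fin: "finite (G ` A0)" "finite (H ` B0)"
    and card: "card (G ` A0) = m" "card (H ` B0) = n"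
    and complete: "\<forall>a\<in>A0. \<forall>b\<in>B0. E' (G a) (H b)"
    by (auto simp: subset_image_inj)
  have "finite A0" "finite B0" "card A0 = m" "card B0 = n"
    using A0(2) B0(2) fin card by (simp_all add: finite_image_iff card_image)
  moreover have "\<forall>a\<in>A0. \<forall>b\<in>B0. E a b"
    using complete A0(1) B0(1) assms(3) by blast
  ultimately show False
    using assms(4) A0(1) B0(1) unfolding K_free_def by blast
qed

lemma card_edges_image:
  assumes "inj_on G A" "inj_on H B"
    and "\<And>v w. v \<in> A \<Longrightarrow> w \<in> B \<Longrightarrow> E v w \<longleftrightarrow> E' (G v) (H w)"
  shows "card (edges (G ` A) (H ` B) E') = card (edges A B E)"
proof -
  have "edges (G ` A) (H ` B) E' = map_prod G H ` edges A B E"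
    using assms(3) unfolding edges_def by fastforce
  moreover have "inj_on (map_prod G H) (edges A B E)"
    using map_prod_inj_on[OF assms(1,2)] by (rule inj_on_subset) (auto simp: edges_def)
  ultimately show ?thesis by (simp add: card_image)
qed

lemma near_linear_zb_embedding:
  assumes "near_linear_zb V' W' E'"
    and "G ` V \<subseteq> V'" "H ` W \<subseteq> W'" "inj_on G V" "inj_on H W"
    and "\<And>v w. v \<in> V \<Longrightarrow> w \<in> W \<Longrightarrow> E v w \<longleftrightarrow> E' (G v) (H w)"
  shows "near_linear_zb V W E"
  unfolding near_linear_zb_def
proof (intro allI impI)
  fix m :: nat and \<epsilon> :: real
  assume "\<epsilon> > 0"
  then obtain c where "c > 0" and bound: "\<And>A B. finite A \<and> A \<subseteq> V' \<and> finite B \<and> B \<subseteq> W' \<and>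
      K_free A B E' m m \<Longrightarrow> real (card (edges A B E')) \<le> c * real (card A + card B) powr (1 + \<epsilon>)"
    using assms(1) unfolding near_linear_zb_def by blast
  have "real (card (edges A B E)) \<le> c * real (card A + card B) powr (1 + \<epsilon>)"
    if "finite A \<and> A \<subseteq> V \<and> finite B \<and> B \<subseteq> W \<and> K_free A B E m m" for A B
  proof -
    have inj: "inj_on G A" "inj_on H B"
      using that assms(4,5) inj_on_subset by blast+
    have edge: "\<And>v w. v \<in> A \<Longrightarrow> w \<in> B \<Longrightarrow> E v w \<longleftrightarrow> E' (G v) (H w)"
      using that assms(6) by blast
    have "K_free (G ` A) (H ` B) E' m m"
      using K_free_image inj edge that by blast
    then have "real (card (edges (G ` A) (H ` B) E')) \<le> c * real (card (G ` A) + card (H ` B)) powr (1 + \<epsilon>)"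
      using that assms(2,3) by (intro bound) blast
    moreover have "card (edges (G ` A) (H ` B) E') = card (edges A B E)"
      using card_edges_image inj edge by blast
    ultimately show ?thesis
      using inj by (simp add: card_image)
  qed
  with \<open>c > 0\<close> show "\<exists>c>0. \<forall>A B. finite A \<and> A \<subseteq> V \<and> finite B \<and> B \<subseteq> W \<and> K_free A B E m m \<longrightarrow>
      real (card (edges A B E)) \<le> c * real (card A + card B) powr (1 + \<epsilon>)"
    by blast
qed

lemma inj_trace_of_diagonal:
  assumes diag: "{[x, x] | x. True} = {as \<in> tuples 2. map (\<lambda>j. f j (as ! i j)) [0..<n] \<in> Y}"
    and i: "\<forall>j<n. i j < 2"
  shows "inj (\<lambda>x. map (\<lambda>j. f j x) [0..<n])"
proof (rule injI)
  fix x y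
  assume "map (\<lambda>j. f j x) [0..<n] = map (\<lambda>j. f j y) [0..<n]"
  then have fxy: "f j x = f j y" if "j < n" for j
    using that map_eq_conv by fastforce
  have "map (\<lambda>j. f j ([x, y] ! i j)) [0..<n] = map (\<lambda>j. f j ([x, x] ! i j)) [0..<n]"
  proof (rule map_cong[OF refl])
    fix j
    assume "j \<in> set [0..<n]"
    then have "j < n" "i j = 0 \<or> i j = 1"
      using i by auto
    then show "f j ([x, y] ! i j) = f j ([x, x] ! i j)"
      using fxy by auto
  qed
  also have "\<dots> \<in> Y"
    using diag by blast
  finally have "[x, y] \<in> {[x, x] | x. True}"
    unfolding diag by (simp add: tuples_def)
  then show "x = y" by simp
qed

lemma concat_map_eq_imp_eq:
  assumes "\<And>x. length (e x) = c" "inj e" "length u = length v"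
    and "concat (map e u) = concat (map e v)"
  shows "u = v"
  using assms(3,4)
proof (induction u v rule: list_induct2)
  case (Cons x xs y ys)
  then have "e x = e y \<and> concat (map e xs) = concat (map e ys)"
    by (simp add: append_eq_append_conv assms(1))
  then show ?case
    using Cons.IH assms(2) by (simp add: inj_eq)
qed simp

lemma near_linear_zb_trace_graph:
  fixes f :: "nat \<Rightarrow> 'a \<Rightarrow> 'b" and e :: "'a \<Rightarrow> 'b list"
  assumes DN: "is_structure DN" "struct_near_linear_zb DN"
    and Y: "Y \<in> DN n" and i: "\<forall>j<n. i j < k + l"
    and e: "\<And>x. length (e x) = c" "inj e"
    and V: "V \<subseteq> tuples k" and W: "W \<subseteq> tuples l"
  shows "near_linear_zb V W
           (\<lambda>v w. v @ w \<in> {as \<in> tuples (k + l). map (\<lambda>j. f j (as ! i j)) [0..<n] \<in> Y})"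
proof -
  define p where "p = n + k * c"
  define q where "q = n + l * c"
  define G where "G v = map (\<lambda>j. f j (v ! i j)) [0..<n] @ concat (map e v)" for v
  define H where "H w = map (\<lambda>j. f j (w ! (i j - k))) [0..<n] @ concat (map e w)" for w
  \<comment> \<open>The entries of G v with i j \<ge> k, and of H w with i j < k, are junk; \<sigma> never reads them.\<close>
  define \<sigma> where "\<sigma> j = (if i j < k then j else p + j)" for j
  define E' where "E' = {ys \<in> tuples (p + q). map (\<lambda>j. ys ! \<sigma> j) [0..<n] \<in> Y}"
  have length_code: "length (concat (map e xs)) = length xs * c" for xs
    using e(1) by (induction xs) auto
  have "E' \<in> DN (p + q)"
    unfolding E'_def using DN(1) Y by (rule is_structure_reindex) (auto simp: \<sigma>_def p_def q_def)
  then have "near_linear_zb (tuples p) (tuples q) (\<lambda>v w. v @ w \<in> E')"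
    using DN is_structure_tuples unfolding struct_near_linear_zb_def by blast
  moreover have "G ` V \<subseteq> tuples p" "H ` W \<subseteq> tuples q"
    using V W by (auto simp: G_def H_def p_def q_def tuples_def length_code)
  moreover have "inj_on G V"
  proof (rule inj_onI)
    fix v v'
    assume "v \<in> V" "v' \<in> V" "G v = G v'"
    then have "length v = length v'" "concat (map e v) = concat (map e v')"
      using V by (auto simp: G_def tuples_def subset_iff)
    then show "v = v'"
      by (rule concat_map_eq_imp_eq[OF e])
  qed
  moreover have "inj_on H W"
  proof (rule inj_onI)
    fix w w'
    assume "w \<in> W" "w' \<in> W" "H w = H w'"
    then have "length w = length w'" "concat (map e w) = concat (map e w')"
      using W by (auto simp: H_def tuples_def subset_iff)
    then show "w = w'"
      by (rule concat_map_eq_imp_eq[OF e])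
  qed
  moreover have "v @ w \<in> {as \<in> tuples (k + l). map (\<lambda>j. f j (as ! i j)) [0..<n] \<in> Y}
      \<longleftrightarrow> G v @ H w \<in> E'" if "v \<in> V" "w \<in> W" for v w
  proof -
    have len: "length v = k" "length w = l"
      using that V W by (auto simp: tuples_def)
    have trace: "map (\<lambda>j. (G v @ H w) ! \<sigma> j) [0..<n] = map (\<lambda>j. f j ((v @ w) ! i j)) [0..<n]"
    proof (rule map_cong[OF refl])
      fix j
      assume "j \<in> set [0..<n]"
      then show "(G v @ H w) ! \<sigma> j = f j ((v @ w) ! i j)"
        using len by (cases "i j < k") (simp_all add: \<sigma>_def p_def G_def H_def nth_append length_code)
    qed
    have "v @ w \<in> tuples (k + l)" "G v @ H w \<in> tuples (p + q)"
      using len by (auto simp: tuples_def G_def H_def p_def q_def length_code)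
    then show ?thesis
      unfolding E'_def by (simp only: mem_Collect_eq trace simp_thms)
  qed
  ultimately show ?thesis
    by (rule near_linear_zb_embedding)
qed

theorem lemma3p4:
  fixes DM :: "nat \<Rightarrow> 'a list set set" and DN :: "nat \<Rightarrow> 'b list set set"
  assumes "is_structure DM" and "is_structure DN"
    and "struct_near_linear_zb DN"
    and "locally_trace_defines DN DM"
  shows "struct_near_linear_zb DM"
  unfolding struct_near_linear_zb_def
proof (intro allI impI)
  fix k l V W E
  assume VWE: "V \<in> DM k \<and> W \<in> DM l \<and> E \<in> DM (k + l)"
  then have V: "V \<subseteq> tuples k" and W: "W \<subseteq> tuples l"
    using is_structure_subset_tuples[OF assms(1)] by blast+
  from VWE have "E \<in> DM (k + l)" by blast
  then obtain n f i Y where i: "\<forall>j<n. i j < k + l" and Y: "Y \<in> DN n"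
    and E: "E = {as \<in> tuples (k + l). map (\<lambda>j. f j (as ! i j)) [0..<n] \<in> Y}"
    by (rule locally_trace_definesE[OF assms(4)])
  obtain c f' i' Y' where diag_i: "\<forall>j<c. i' j < 2" and "Y' \<in> DN c"
    and diag: "{[x :: 'a, x] | x. True} = {as \<in> tuples 2. map (\<lambda>j. f' j (as ! i' j)) [0..<c] \<in> Y'}"
    by (rule locally_trace_definesE[OF assms(4) is_structure_diagonal[OF assms(1)]])
  have code: "inj (\<lambda>x. map (\<lambda>j. f' j x) [0..<c])"
    using diag diag_i by (rule inj_trace_of_diagonal)
  show "near_linear_zb V W (\<lambda>v w. v @ w \<in> E)"
    unfolding E by (rule near_linear_zb_trace_graph[OF assms(2,3) Y i _ code V W]) simp
qed

end
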